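(* Let $M$ be a graded $R$-module. The natural map $\varphi=\phi^R\circ\psi^q$ is continuous with respect to the quasi-Zariski topology on $qp.Spec_g(M)$ and the Zariski topology on $Spec_g(\overline R)$; more precisely, for every graded ideal $I$ of $R$ containing $\mathrm{Ann}(M)$, $$\varphi^{-1}(V_{\overline R}^g(\overline I))=(\phi^R\circ\psi^q)^{-1}(V_{\overline R}^g(\overline I))=(\psi^q)^{-1}(qp\text{-}V_{\overline R}^g(\overline I))=qp\text{-}V_M^g(IM).$$
   Context: $R=\bigoplus_{g\in G}R_g$ is a graded commutative ring with identity graded by a group $G$, $h(R)=\bigcup_g R_g$; $M$ is a graded $R$-module, $h(M)$ its homogeneous elements. $Gr(I)$ is the graded radical of a graded ideal $I$. $Spec_g(R)$: graded prime ideals. $(K:_RM)=\{r: rM\subseteq K\}$. Graded prime submodule: proper graded $P$ with $rm\in P$ ($r\in h(R), m\in h(M)$) implying $m\in P$ or $r\in(P:_RM)$. $Gr_M(K)$: intersection of graded prime submodules containing $K$ ($M$ if none). Graded primeful property of $K$: for each graded prime $p\supseteq(K:_RM)$ there is a graded prime submodule $P\supseteq K$ with $(P:_RM)=p$. Graded quasi-primary submodule: proper graded $Q$ with $rm\in Q$ ($r\in h(R),m\in h(M)$) implying $r\in Gr((Q:_RM))$ or $m\in Gr_M(Q)$. $qp.Spec_g(M)$: graded quasi-primary submodules with the graded primeful property. $qp\text{-}V_M^g(K)=\{Q\in qp.Spec_g(M): Gr((Q:_RM))\supseteq Gr((K:_RM))\}$; the quasi-Zariski topology on $qp.Spec_g(M)$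 has closed sets exactly the $qp\text{-}V_M^g(K)$. $\overline R=R/\mathrm{Ann}(M)$, $\overline I=I/\mathrm{Ann}(M)$. $Spec_g(\overline R)$ has the Zariski topology with closed sets $V_{\overline R}^g(\overline I)=\{\overline p\in Spec_g(\overline R):\overline I\subseteq\overline p\}$. A graded quasi-primary ideal of a graded ring is a proper graded ideal $q$ such that $ab\in q$ with $a,b$ homogeneous implies $a\in Gr(q)$ or $b\in Gr(q)$; $qp.Spec_g(\overline R)$ is the set of these in $\overline R$. $\psi^q:qp.Spec_g(M)\to qp.Spec_g(\overline R)$, $\psi^q(Q)=\overline{(Q:_RM)}$; $\phi^R:qp.Spec_g(\overline R)\to Spec_g(\overline R)$, $\phi^R(\overline q)=\overline{Gr(q)}$; $qp\text{-}V_{\overline R}^g(\overline I)=(\phi^R)^{-1}(V_{\overline R}^g(\overline I))$, i.e. the set of $\overline q\in qp.Spec_g(\overline R)$ with $Gr(q)\supseteq I$. The natural map is $\varphi(Q)=\overline{(Gr_M(Q):_RM)}=\overline{Gr((Q:_RM))}$. *)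

theory Defs
  imports Main "HOL.Modules"
begin

(* Conventions: the graded ring R is the whole type 'r (a comm_ring_1), the graded
   module M is the whole type 'm, with action scale; G is the type 'g (a group, written
   additively, not necessarily abelian). *)

definition dsum_decomp :: "('g \<Rightarrow> 'a::ab_group_add set) \<Rightarrow> 'a \<Rightarrow> ('g \<Rightarrow> 'a) \<Rightarrow> bool" where
  "dsum_decomp A x c \<longleftrightarrow> finite {g. c g \<noteq> 0} \<and> (\<forall>g. c g \<in> A g) \<and> x = (\<Sum>g\<in>{g. c g \<noteq> 0}. c g)"

definition additive_subgroup :: "'a::ab_group_add set \<Rightarrow> bool" where
  "additive_subgroup S \<longleftrightarrow> 0 \<in> S \<and> (\<forall>x\<in>S. \<forall>y\<in>S. x + y \<in> S) \<and> (\<forall>x\<in>S. - x \<in> S)"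

definition internal_dsum :: "('g \<Rightarrow> 'a::ab_group_add set) \<Rightarrow> bool" where
  "internal_dsum A \<longleftrightarrow> (\<forall>g. additive_subgroup (A g)) \<and> (\<forall>x. \<exists>!c. dsum_decomp A x c)"

definition comp :: "('g \<Rightarrow> 'a::ab_group_add set) \<Rightarrow> 'a \<Rightarrow> 'g \<Rightarrow> 'a" where
  "comp A x = (THE c. dsum_decomp A x c)"

definition hom :: "('g \<Rightarrow> 'a set) \<Rightarrow> 'a set" where
  "hom A = (\<Union>g. A g)"

definition graded_ring :: "('g::group_add \<Rightarrow> 'r::comm_ring_1 set) \<Rightarrow> bool" where
  "graded_ring RG \<longleftrightarrow> internal_dsum RG \<and>
     (\<forall>g h. \<forall>a\<in>RG g. \<forall>b\<in>RG h. a * b \<in> RG (g + h))"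

definition graded_module ::
  "('g::group_add \<Rightarrow> 'r::comm_ring_1 set) \<Rightarrow> ('g \<Rightarrow> 'm::ab_group_add set) \<Rightarrow> ('r \<Rightarrow> 'm \<Rightarrow> 'm) \<Rightarrow> bool" where
  "graded_module RG MG scale \<longleftrightarrow> graded_ring RG \<and> module scale \<and> internal_dsum MG \<and>
     (\<forall>g h. \<forall>a\<in>RG g. \<forall>m\<in>MG h. scale a m \<in> MG (g + h))"

definition is_ideal :: "'r::comm_ring_1 set \<Rightarrow> bool" where
  "is_ideal I \<longleftrightarrow> 0 \<in> I \<and> (\<forall>x\<in>I. \<forall>y\<in>I. x + y \<in> I) \<and> (\<forall>r. \<forall>x\<in>I. r * x \<in> I)"

definition graded_ideal :: "('g \<Rightarrow> 'r::comm_ring_1 set) \<Rightarrow> 'r set \<Rightarrow> bool" where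
  "graded_ideal RG I \<longleftrightarrow> is_ideal I \<and> (\<forall>x\<in>I. \<forall>g. comp RG x g \<in> I)"

definition is_submodule :: "('r::comm_ring_1 \<Rightarrow> 'm::ab_group_add \<Rightarrow> 'm) \<Rightarrow> 'm set \<Rightarrow> bool" where
  "is_submodule scale N \<longleftrightarrow> 0 \<in> N \<and> (\<forall>x\<in>N. \<forall>y\<in>N. x + y \<in> N) \<and> (\<forall>r. \<forall>x\<in>N. scale r x \<in> N)"

definition graded_submodule :: "('g \<Rightarrow> 'm::ab_group_add set) \<Rightarrow> ('r::comm_ring_1 \<Rightarrow> 'm \<Rightarrow> 'm) \<Rightarrow> 'm set \<Rightarrow> bool" where
  "graded_submodule MG scale N \<longleftrightarrow> is_submodule scale N \<and> (\<forall>x\<in>N. \<forall>g. comp MG x g \<in> N)"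

definition colon :: "('r \<Rightarrow> 'm \<Rightarrow> 'm) \<Rightarrow> 'm set \<Rightarrow> 'r set" where
  "colon scale K = {r. \<forall>m. scale r m \<in> K}"

definition Ann :: "('r \<Rightarrow> 'm::zero \<Rightarrow> 'm) \<Rightarrow> 'r set" where
  "Ann scale = colon scale {0}"

definition ideal_times_module :: "('r \<Rightarrow> 'm::ab_group_add \<Rightarrow> 'm) \<Rightarrow> 'r set \<Rightarrow> 'm set" where
  "ideal_times_module scale I =
     {x. \<exists>xs. set (map fst xs) \<subseteq> I \<and> x = (\<Sum>(r, m)\<leftarrow>xs. scale r m)}"

definition Gr :: "('g \<Rightarrow> 'r::comm_ring_1 set) \<Rightarrow> 'r set \<Rightarrow> 'r set" where
  "Gr RG I = {r. \<forall>g. \<exists>n::nat. (comp RG r g) ^ n \<in> I}"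

definition graded_prime_ideal :: "('g \<Rightarrow> 'r::comm_ring_1 set) \<Rightarrow> 'r set \<Rightarrow> bool" where
  "graded_prime_ideal RG p \<longleftrightarrow> graded_ideal RG p \<and> p \<noteq> UNIV \<and>
     (\<forall>a\<in>hom RG. \<forall>b\<in>hom RG. a * b \<in> p \<longrightarrow> a \<in> p \<or> b \<in> p)"

definition graded_quasi_primary_ideal :: "('g \<Rightarrow> 'r::comm_ring_1 set) \<Rightarrow> 'r set \<Rightarrow> bool" where
  "graded_quasi_primary_ideal RG q \<longleftrightarrow> graded_ideal RG q \<and> q \<noteq> UNIV \<and>
     (\<forall>a\<in>hom RG. \<forall>b\<in>hom RG. a * b \<in> q \<longrightarrow> a \<in> Gr RG q \<or> b \<in> Gr RG q)"

definition graded_prime_submodule ::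
  "('g \<Rightarrow> 'r::comm_ring_1 set) \<Rightarrow> ('g \<Rightarrow> 'm::ab_group_add set) \<Rightarrow> ('r \<Rightarrow> 'm \<Rightarrow> 'm) \<Rightarrow> 'm set \<Rightarrow> bool" where
  "graded_prime_submodule RG MG scale P \<longleftrightarrow> graded_submodule MG scale P \<and> P \<noteq> UNIV \<and>
     (\<forall>r\<in>hom RG. \<forall>m\<in>hom MG. scale r m \<in> P \<longrightarrow> m \<in> P \<or> r \<in> colon scale P)"

text \<open>Gr_M(K): intersection of graded prime submodules containing K (M if there are none).\<close>
definition GrM ::
  "('g \<Rightarrow> 'r::comm_ring_1 set) \<Rightarrow> ('g \<Rightarrow> 'm::ab_group_add set) \<Rightarrow> ('r \<Rightarrow> 'm \<Rightarrow> 'm) \<Rightarrow> 'm set \<Rightarrow> 'm set" where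
  "GrM RG MG scale K = \<Inter> {P. graded_prime_submodule RG MG scale P \<and> K \<subseteq> P}"

definition graded_primeful ::
  "('g \<Rightarrow> 'r::comm_ring_1 set) \<Rightarrow> ('g \<Rightarrow> 'm::ab_group_add set) \<Rightarrow> ('r \<Rightarrow> 'm \<Rightarrow> 'm) \<Rightarrow> 'm set \<Rightarrow> bool" where
  "graded_primeful RG MG scale K \<longleftrightarrow>
     (\<forall>p. graded_prime_ideal RG p \<and> colon scale K \<subseteq> p \<longrightarrow>
        (\<exists>P. graded_prime_submodule RG MG scale P \<and> K \<subseteq> P \<and> colon scale P = p))"

definition graded_quasi_primary_submodule ::
  "('g \<Rightarrow> 'r::comm_ring_1 set) \<Rightarrow> ('g \<Rightarrow> 'm::ab_group_add set) \<Rightarrow> ('r \<Rightarrow> 'm \<Rightarrow> 'm) \<Rightarrow> 'm set \<Rightarrow> bool" where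
  "graded_quasi_primary_submodule RG MG scale Q \<longleftrightarrow> graded_submodule MG scale Q \<and> Q \<noteq> UNIV \<and>
     (\<forall>r\<in>hom RG. \<forall>m\<in>hom MG. scale r m \<in> Q \<longrightarrow>
        r \<in> Gr RG (colon scale Q) \<or> m \<in> GrM RG MG scale Q)"

definition qpSpec ::
  "('g \<Rightarrow> 'r::comm_ring_1 set) \<Rightarrow> ('g \<Rightarrow> 'm::ab_group_add set) \<Rightarrow> ('r \<Rightarrow> 'm \<Rightarrow> 'm) \<Rightarrow> 'm set set" where
  "qpSpec RG MG scale = {Q. graded_quasi_primary_submodule RG MG scale Q \<and> graded_primeful RG MG scale Q}"

definition qpV_M ::
  "('g \<Rightarrow> 'r::comm_ring_1 set) \<Rightarrow> ('g \<Rightarrow> 'm::ab_group_add set) \<Rightarrow> ('r \<Rightarrow> 'm \<Rightarrow> 'm) \<Rightarrow> 'm set \<Rightarrow> 'm set set" where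
  "qpV_M RG MG scale K =
     {Q \<in> qpSpec RG MG scale. Gr RG (colon scale K) \<subseteq> Gr RG (colon scale Q)}"

text \<open>By the correspondence theorem, an ideal of Rbar is
represented by its preimage in R, i.e. an ideal of R containing Ann(M); the map
I \<mapsto> Ibar is this identification.  Graded prime (resp. graded quasi-primary) ideals of
Rbar (with grading Rbar_g = image of R_g) correspond exactly to graded prime (resp.
graded quasi-primary) ideals of R containing Ann(M), and Gr commutes with the bar.\<close>

definition Spec_Rbar :: "('g \<Rightarrow> 'r::comm_ring_1 set) \<Rightarrow> ('r \<Rightarrow> 'm::ab_group_add \<Rightarrow> 'm) \<Rightarrow> 'r set set" where
  "Spec_Rbar RG scale = {p. graded_prime_ideal RG p \<and> Ann scale \<subseteq> p}"

definition V_Rbar :: "('g \<Rightarrow> 'r::comm_ring_1 set) \<Rightarrow> ('r \<Rightarrow> 'm::ab_group_add \<Rightarrow> 'm) \<Rightarrow> 'r set \<Rightarrow> 'r set set" where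
  "V_Rbar RG scale I = {p \<in> Spec_Rbar RG scale. I \<subseteq> p}"

definition qpSpec_Rbar :: "('g \<Rightarrow> 'r::comm_ring_1 set) \<Rightarrow> ('r \<Rightarrow> 'm::ab_group_add \<Rightarrow> 'm) \<Rightarrow> 'r set set" where
  "qpSpec_Rbar RG scale = {q. graded_quasi_primary_ideal RG q \<and> Ann scale \<subseteq> q}"

definition psi_q :: "('r \<Rightarrow> 'm \<Rightarrow> 'm) \<Rightarrow> 'm set \<Rightarrow> 'r set" where
  "psi_q scale Q = colon scale Q"

definition phi_R :: "('g \<Rightarrow> 'r::comm_ring_1 set) \<Rightarrow> 'r set \<Rightarrow> 'r set" where
  "phi_R RG q = Gr RG q"

definition qpV_Rbar :: "('g \<Rightarrow> 'r::comm_ring_1 set) \<Rightarrow> ('r \<Rightarrow> 'm::ab_group_add \<Rightarrow> 'm) \<Rightarrow> 'r set \<Rightarrow> 'r set set" where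
  "qpV_Rbar RG scale I = {q \<in> qpSpec_Rbar RG scale. phi_R RG q \<in> V_Rbar RG scale I}"

definition varphi ::
  "('g \<Rightarrow> 'r::comm_ring_1 set) \<Rightarrow> ('r \<Rightarrow> 'm \<Rightarrow> 'm) \<Rightarrow> 'm set \<Rightarrow> 'r set" where
  "varphi RG scale = phi_R RG \<circ> psi_q scale"

end

theory Submission
  imports Defs
begin

(* Two facts carry the theorem; the rest is unfolding of the definitions.
   First, the graded radical of a graded ideal J is the intersection of the graded primes
   containing J: a graded ideal maximal (Zorn) among those containing J and avoiding the
   powers of a homogeneous element is prime.
   Second, (Gr_M(Q) :_R M) = Gr((Q :_R M)) for a graded primeful submodule Q.  Indeed
   (P :_R M) is a graded prime ideal for every graded prime submodule P, and primefulness
   says that every graded prime over (Q :_R M) arises in this way from some P containing Q.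
   This identity makes (Q :_R M) quasi-primary, and it turns I \<subseteq> Gr((Q :_R M)) into
   IM \<subseteq> Gr_M(Q), which is equivalent to Gr((IM :_R M)) \<subseteq> Gr((Q :_R M)). *)

section \<open>Homogeneous components\<close>

definition supp :: "('g \<Rightarrow> 'a::ab_group_add set) \<Rightarrow> 'a \<Rightarrow> 'g set" where
  "supp A x = {g. comp A x g \<noteq> 0}"

lemma dsum_decomp_comp: "internal_dsum A \<Longrightarrow> dsum_decomp A x (comp A x)"
  unfolding internal_dsum_def comp_def by (metis theI')

lemma comp_unique: "internal_dsum A \<Longrightarrow> dsum_decomp A x c \<Longrightarrow> comp A x = c"
  unfolding internal_dsum_def comp_def by (metis the1_equality)

lemma comp_mem: "internal_dsum A \<Longrightarrow> comp A x g \<in> A g"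
  using dsum_decomp_comp unfolding dsum_decomp_def by blast

lemma finite_supp: "internal_dsum A \<Longrightarrow> finite (supp A x)"
  using dsum_decomp_comp unfolding dsum_decomp_def supp_def by blast

lemma sum_comp_supp: "internal_dsum A \<Longrightarrow> sum (comp A x) (supp A x) = x"
  using dsum_decomp_comp unfolding dsum_decomp_def supp_def by metis

lemma sum_comp_superset:
  assumes "internal_dsum A" "finite S" "supp A x \<subseteq> S"
  shows "sum (comp A x) S = x"
proof -
  have "sum (comp A x) S = sum (comp A x) (supp A x)"
    using assms(2,3) by (intro sum.mono_neutral_right) (auto simp: supp_def)
  then show ?thesis using sum_comp_supp[OF assms(1)] by simp
qed

lemma comp_eqI:
  assumes "internal_dsum A" "finite S" "\<And>g. c g \<in> A g" "\<And>g. g \<notin> S \<Longrightarrow> c g = 0" "x = sum c S"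
  shows "comp A x = c"
proof (rule comp_unique[OF assms(1)])
  have sub: "{g. c g \<noteq> 0} \<subseteq> S" using assms(4) by blast
  have "sum c S = sum c {g. c g \<noteq> 0}"
    by (rule sum.mono_neutral_right[OF assms(2) sub]) auto
  then show "dsum_decomp A x c" unfolding dsum_decomp_def
    using assms(2,3,5) finite_subset[OF sub] by auto
qed

lemma internal_dsum_zero_mem: "internal_dsum A \<Longrightarrow> 0 \<in> A g"
  unfolding internal_dsum_def additive_subgroup_def by blast

lemma internal_dsum_add_mem: "internal_dsum A \<Longrightarrow> x \<in> A g \<Longrightarrow> y \<in> A g \<Longrightarrow> x + y \<in> A g"
  unfolding internal_dsum_def additive_subgroup_def by blast

lemma comp_add: "internal_dsum A \<Longrightarrow> comp A (x + y) = (\<lambda>g. comp A x g + comp A y g)"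
proof (rule comp_eqI[where S = "supp A x \<union> supp A y"])
  assume A: "internal_dsum A"
  show "finite (supp A x \<union> supp A y)" using finite_supp[OF A] by auto
  show "comp A x g + comp A y g \<in> A g" for g using A comp_mem internal_dsum_add_mem by metis
  show "comp A x g + comp A y g = 0" if "g \<notin> supp A x \<union> supp A y" for g
    using that unfolding supp_def by auto
  have "x + y = sum (comp A x) (supp A x \<union> supp A y) + sum (comp A y) (supp A x \<union> supp A y)"
    using A finite_supp[OF A] by (simp add: sum_comp_superset)
  then show "x + y = (\<Sum>g\<in>supp A x \<union> supp A y. comp A x g + comp A y g)"
    by (simp add: sum.distrib)
qed

lemma comp_zero: "internal_dsum A \<Longrightarrow> comp A 0 = (\<lambda>g. 0)"
  by (rule comp_eqI[where S = "{}"]) (auto simp: internal_dsum_zero_mem)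

lemma comp_homogeneous: "internal_dsum A \<Longrightarrow> a \<in> A g \<Longrightarrow> comp A a = (\<lambda>h. if h = g then a else 0)"
  by (rule comp_eqI[where S = "{g}"]) (auto simp: internal_dsum_zero_mem)

lemma comp_sum: "internal_dsum A \<Longrightarrow> comp A (sum f F) g = (\<Sum>i\<in>F. comp A (f i) g)"
  by (induction F rule: infinite_finite_induct) (auto simp: comp_zero comp_add)

lemma comp_additive_shift:
  fixes RG :: "'g::group_add \<Rightarrow> 'r::ab_group_add set"
  assumes R: "internal_dsum RG" and M: "internal_dsum MG"
    and add: "\<And>x y. f (x + y) = f x + f y"
    and deg: "\<And>g a. a \<in> RG g \<Longrightarrow> f a \<in> MG (g + h)"
  shows "comp MG (f r) = (\<lambda>k. f (comp RG r (k - h)))"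
proof -
  interpret additive f by standard (rule add)
  show ?thesis
  proof (rule comp_eqI[OF M, where S = "(\<lambda>g. g + h) ` supp RG r"])
    show "finite ((\<lambda>g. g + h) ` supp RG r)" using finite_supp[OF R] by auto
    show "f (comp RG r (k - h)) \<in> MG k" for k
      using deg[OF comp_mem[OF R, of r "k - h"]] by (metis diff_add_cancel)
    show "f (comp RG r (k - h)) = 0" if "k \<notin> (\<lambda>g. g + h) ` supp RG r" for k
    proof -
      have "k - h \<notin> supp RG r" using that by (metis diff_add_cancel image_eqI)
      then show ?thesis by (simp add: supp_def zero)
    qed
    have "f r = (\<Sum>g\<in>supp RG r. f (comp RG r g))"
      using sum_comp_supp[OF R, of r] by (metis sum)
    also have "\<dots> = (\<Sum>k\<in>(\<lambda>g. g + h) ` supp RG r. f (comp RG r (k - h)))"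
      by (subst sum.reindex) (auto simp: inj_on_def)
    finally show "f r = (\<Sum>k\<in>(\<lambda>g. g + h) ` supp RG r. f (comp RG r (k - h)))" .
  qed
qed

section \<open>Graded ideals and the graded radical\<close>

lemma ideal_sum_mem: "is_ideal J \<Longrightarrow> (\<And>i. i \<in> S \<Longrightarrow> f i \<in> J) \<Longrightarrow> sum f S \<in> J"
  by (induction S rule: infinite_finite_induct) (auto simp: is_ideal_def)

lemma ideal_mult_mem: "is_ideal J \<Longrightarrow> x \<in> J \<Longrightarrow> r * x \<in> J"
  by (auto simp: is_ideal_def)

lemma ideal_add_mem: "is_ideal J \<Longrightarrow> x \<in> J \<Longrightarrow> y \<in> J \<Longrightarrow> x + y \<in> J"
  by (auto simp: is_ideal_def)

lemma ideal_eq_UNIV: "is_ideal J \<Longrightarrow> 1 \<in> J \<Longrightarrow> J = UNIV"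
  using ideal_mult_mem[of J 1] by auto

lemma Gr_mono: "X \<subseteq> Y \<Longrightarrow> Gr RG X \<subseteq> Gr RG Y"
  unfolding Gr_def by blast

lemma subset_Gr: "graded_ideal RG X \<Longrightarrow> X \<subseteq> Gr RG X"
  unfolding Gr_def graded_ideal_def by (auto intro: exI[of _ 1])

lemma graded_ideal_Inter: "(\<And>p. p \<in> S \<Longrightarrow> graded_ideal RG p) \<Longrightarrow> graded_ideal RG (\<Inter>S)"
  unfolding graded_ideal_def is_ideal_def by blast

lemma graded_ideal_Union_chain:
  assumes "C \<noteq> {}" "subset.chain {K. graded_ideal RG K} C"
  shows "graded_ideal RG (\<Union>C)"
proof -
  have gi: "\<And>K. K \<in> C \<Longrightarrow> graded_ideal RG K"
    and ch: "\<And>A B. A \<in> C \<Longrightarrow> B \<in> C \<Longrightarrow> A \<subseteq> B \<or> B \<subseteq> A"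
    using assms(2) unfolding subset_chain_def by auto
  have "is_ideal (\<Union>C)"
    unfolding is_ideal_def
  proof (intro conjI ballI allI)
    show "0 \<in> \<Union>C" using assms(1) gi by (force simp: graded_ideal_def is_ideal_def)
  next
    fix a b assume "a \<in> \<Union>C" "b \<in> \<Union>C"
    then obtain A B where "A \<in> C" "B \<in> C" "a \<in> A" "b \<in> B" by blast
    then obtain K where "K \<in> C" "a \<in> K" "b \<in> K" using ch by blast
    then show "a + b \<in> \<Union>C" using gi ideal_add_mem unfolding graded_ideal_def by blast
  next
    fix r a assume "a \<in> \<Union>C"
    then show "r * a \<in> \<Union>C" using gi ideal_mult_mem unfolding graded_ideal_def by blast
  qed
  moreover have "\<forall>a\<in>\<Union>C. \<forall>g. comp RG a g \<in> \<Union>C" using gi by (auto simp: graded_ideal_def)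
  ultimately show ?thesis unfolding graded_ideal_def by blast
qed

locale ring_grading =
  fixes RG :: "'g::group_add \<Rightarrow> 'r::comm_ring_1 set"
  assumes graded_ring: "graded_ring RG"
begin

lemma R_dsum: "internal_dsum RG"
  using graded_ring unfolding graded_ring_def by blast

lemma mult_mem: "a \<in> RG g \<Longrightarrow> b \<in> RG h \<Longrightarrow> a * b \<in> RG (g + h)"
  using graded_ring unfolding graded_ring_def by blast

lemma comp_mult_right: "b \<in> RG h \<Longrightarrow> comp RG (r * b) = (\<lambda>k. comp RG r (k - h) * b)"
  by (rule comp_additive_shift[OF R_dsum R_dsum, where f = "\<lambda>x. x * b"]) (auto simp: distrib_right mult_mem)

lemma one_mem_R0: "1 \<in> RG 0"
proof -
  define e where "e = comp RG 1 0"
  \<comment> \<open>Comparing degree-h components of 1 * x = x shows that e acts as the identity on each R_h,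
    hence on R; so e = 1.\<close>
  have e_homogeneous: "e * x = x" if "x \<in> RG h" for x h
  proof -
    have "comp RG (1 * x) h = e * x" using comp_mult_right[OF that, of 1] by (simp add: e_def)
    then show ?thesis using comp_homogeneous[OF R_dsum that] by simp
  qed
  have "e * r = r" for r
  proof -
    have "e * r = (\<Sum>g\<in>supp RG r. e * comp RG r g)"
      using sum_comp_supp[OF R_dsum, of r] by (metis sum_distrib_left)
    also have "\<dots> = (\<Sum>g\<in>supp RG r. comp RG r g)"
      using e_homogeneous comp_mem[OF R_dsum] by (intro sum.cong) auto
    finally show ?thesis using sum_comp_supp[OF R_dsum] by simp
  qed
  from this[of 1] show ?thesis using comp_mem[OF R_dsum, of 1 0] e_def by simp
qed

lemma homogeneous_power: "a \<in> hom RG \<Longrightarrow> a ^ n \<in> hom RG"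
proof (induction n)
  case 0 then show ?case using one_mem_R0 by (auto simp: hom_def)
next
  case (Suc n) then show ?case using mult_mem by (fastforce simp: hom_def)
qed

lemma homogeneous_mult: "a \<in> hom RG \<Longrightarrow> b \<in> hom RG \<Longrightarrow> a * b \<in> hom RG"
  using mult_mem by (fastforce simp: hom_def)

lemma graded_ideal_mem_iff_comp: "graded_ideal RG J \<Longrightarrow> x \<in> J \<longleftrightarrow> (\<forall>g. comp RG x g \<in> J)"
  unfolding graded_ideal_def using ideal_sum_mem sum_comp_supp[OF R_dsum] by metis

lemma homogeneous_mem_Gr_iff:
  assumes c: "c \<in> hom RG" and X: "is_ideal X"
  shows "c \<in> Gr RG X \<longleftrightarrow> (\<exists>n. c ^ n \<in> X)"
proof -
  obtain k where comp_c: "comp RG c = (\<lambda>g. if g = k then c else 0)"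
    using c comp_homogeneous[OF R_dsum] by (auto simp: hom_def)
  have "(0::'r) ^ 1 \<in> X" using X by (simp add: is_ideal_def)
  then have "(\<forall>g. \<exists>n. (if g = k then c else 0) ^ n \<in> X) \<longleftrightarrow> (\<exists>n. c ^ n \<in> X)"
    by (metis (full_types))
  then show ?thesis by (simp add: Gr_def comp_c)
qed

lemma graded_prime_ideal_mem_of_power:
  "graded_prime_ideal RG p \<Longrightarrow> a \<in> hom RG \<Longrightarrow> a ^ n \<in> p \<Longrightarrow> a \<in> p"
proof (induction n)
  case 0 then show ?case
    using ideal_eq_UNIV unfolding graded_prime_ideal_def graded_ideal_def by auto
next
  case (Suc n) then show ?case
    using homogeneous_power unfolding graded_prime_ideal_def by auto
qed

lemma Gr_subset_prime: "graded_prime_ideal RG p \<Longrightarrow> X \<subseteq> p \<Longrightarrow> Gr RG X \<subseteq> p"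
proof
  fix r assume p: "graded_prime_ideal RG p" and X: "X \<subseteq> p" and r: "r \<in> Gr RG X"
  have "comp RG r g \<in> p" for g
  proof -
    obtain n where "comp RG r g ^ n \<in> X" using r unfolding Gr_def by blast
    moreover have "comp RG r g \<in> hom RG" using comp_mem[OF R_dsum] by (auto simp: hom_def)
    ultimately show ?thesis using graded_prime_ideal_mem_of_power[OF p] X by blast
  qed
  then show "r \<in> p" using p graded_ideal_mem_iff_comp unfolding graded_prime_ideal_def by blast
qed

lemma graded_ideal_add_principal:
  assumes p: "graded_ideal RG p" and a: "a \<in> RG h"
  shows "graded_ideal RG {u + t * a | u t. u \<in> p}"
proof -
  have ip: "is_ideal p" using p by (simp add: graded_ideal_def)
  let ?K = "{u + t * a | u t. u \<in> p}"
  have "is_ideal ?K"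
    unfolding is_ideal_def
  proof (intro conjI ballI allI)
    show "0 \<in> ?K" using ip by (intro CollectI exI[of _ 0]) (simp add: is_ideal_def)
  next
    fix x y assume "x \<in> ?K" "y \<in> ?K"
    then obtain u t v s where "u \<in> p" "v \<in> p" "x = u + t * a" "y = v + s * a" by blast
    moreover have "u + t * a + (v + s * a) = (u + v) + (t + s) * a" by (simp add: algebra_simps)
    ultimately show "x + y \<in> ?K" using ideal_add_mem[OF ip] by blast
  next
    fix r x assume "x \<in> ?K"
    then obtain u t where "u \<in> p" "x = u + t * a" by blast
    moreover have "r * (u + t * a) = r * u + (r * t) * a" by (simp add: algebra_simps)
    ultimately show "r * x \<in> ?K" using ideal_mult_mem[OF ip] by blast
  qed
  moreover have "comp RG x g \<in> ?K" if x: "x \<in> ?K" for x g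
  proof -
    obtain u t where "u \<in> p" "x = u + t * a" using x by blast
    then have "comp RG u g \<in> p" "comp RG x g = comp RG u g + comp RG t (g - h) * a"
      using p comp_add[OF R_dsum] comp_mult_right[OF a] by (simp_all add: graded_ideal_def)
    then show ?thesis by blast
  qed
  ultimately show ?thesis unfolding graded_ideal_def by blast
qed

lemma graded_prime_ideal_if_maximal:
  assumes p: "graded_ideal RG p" and y: "\<And>n. y ^ n \<notin> p"
    and max: "\<And>K. graded_ideal RG K \<Longrightarrow> p \<subseteq> K \<Longrightarrow> (\<forall>n. y ^ n \<notin> K) \<Longrightarrow> K = p"
  shows "graded_prime_ideal RG p"
proof -
  have ip: "is_ideal p" using p by (simp add: graded_ideal_def)
  have power_in_sum: "\<exists>n u t. u \<in> p \<and> y ^ n = u + t * a" if a: "a \<in> hom RG" "a \<notin> p" for a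
  proof -
    obtain h where ah: "a \<in> RG h" using a by (auto simp: hom_def)
    let ?K = "{u + t * a | u t. u \<in> p}"
    have pK: "p \<subseteq> ?K"
    proof
      fix z assume "z \<in> p"
      then show "z \<in> ?K" by (intro CollectI exI[of _ z] exI[of _ 0]) simp
    qed
    have "a \<in> ?K" using ip by (intro CollectI exI[of _ 0] exI[of _ 1]) (simp add: is_ideal_def)
    then have "?K \<noteq> p" using a(2) by metis
    then have "\<exists>n. y ^ n \<in> ?K" using max[OF graded_ideal_add_principal[OF p ah] pK] by blast
    then show ?thesis by blast
  qed
  have "a \<in> p \<or> b \<in> p" if a: "a \<in> hom RG" and b: "b \<in> hom RG" and ab: "a * b \<in> p" for a b
  proof (rule ccontr)
    assume "\<not> (a \<in> p \<or> b \<in> p)"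
    then obtain n u t m v s where uv: "u \<in> p" "v \<in> p" "y ^ n = u + t * a" "y ^ m = v + s * b"
      using power_in_sum a b by meson
    have "y ^ (n + m) = (v + s * b) * u + (t * a) * v + (t * s) * (a * b)"
      by (simp add: power_add uv algebra_simps)
    also have "\<dots> \<in> p" using uv ab ideal_add_mem[OF ip] ideal_mult_mem[OF ip] by simp
    finally show False using y by blast
  qed
  moreover have "p \<noteq> UNIV" using y[of 0] by auto
  ultimately show ?thesis using p unfolding graded_prime_ideal_def by blast
qed

lemma exists_graded_prime_not_mem:
  assumes J: "graded_ideal RG J" and x: "x \<notin> Gr RG J"
  obtains p where "graded_prime_ideal RG p" "J \<subseteq> p" "x \<notin> p"
proof -
  obtain g where avoids_J: "\<And>n. comp RG x g ^ n \<notin> J" using x unfolding Gr_def by blast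
  define y where "y = comp RG x g"
  define F where "F = {K. graded_ideal RG K \<and> J \<subseteq> K \<and> (\<forall>n. y ^ n \<notin> K)}"
  have chain: "\<Union>C \<in> F" if C: "C \<noteq> {}" "subset.chain F C" for C
  proof -
    have CF: "C \<subseteq> F" and ch: "subset.chain {K. graded_ideal RG K} C"
      using C(2) unfolding F_def subset_chain_def by auto
    have "graded_ideal RG (\<Union>C)" by (rule graded_ideal_Union_chain[OF C(1) ch])
    moreover have "J \<subseteq> \<Union>C" using C(1) CF unfolding F_def by blast
    moreover have "\<forall>n. y ^ n \<notin> \<Union>C" using CF unfolding F_def by blast
    ultimately show ?thesis unfolding F_def by blast
  qed
  have "F \<noteq> {}" using J avoids_J unfolding F_def y_def by blast
  then obtain p where pF: "p \<in> F" and max: "\<And>K. K \<in> F \<Longrightarrow> p \<subseteq> K \<Longrightarrow> K = p"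
    using subset_Zorn_nonempty[OF _ chain] by blast
  have p: "graded_ideal RG p" "J \<subseteq> p" "\<And>n. y ^ n \<notin> p"
    using pF unfolding F_def by auto
  have "graded_prime_ideal RG p"
  proof (rule graded_prime_ideal_if_maximal[OF p(1) p(3)])
    fix K assume "graded_ideal RG K" "p \<subseteq> K" "\<forall>n. y ^ n \<notin> K"
    then show "K = p" using max[of K] p(2) by (auto simp: F_def)
  qed
  moreover have "x \<notin> p"
  proof
    assume "x \<in> p"
    then have "y ^ 1 \<in> p" using p(1) unfolding y_def graded_ideal_def by simp
    then show False using p(3) by blast
  qed
  ultimately show ?thesis using that p(2) by blast
qed

lemma Gr_eq_Inter_graded_primes:
  assumes J: "graded_ideal RG J"
  shows "Gr RG J = \<Inter>{p. graded_prime_ideal RG p \<and> J \<subseteq> p}"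
proof
  show "Gr RG J \<subseteq> \<Inter>{p. graded_prime_ideal RG p \<and> J \<subseteq> p}"
    using Gr_subset_prime by blast
  show "\<Inter>{p. graded_prime_ideal RG p \<and> J \<subseteq> p} \<subseteq> Gr RG J"
  proof
    fix x assume x: "x \<in> \<Inter>{p. graded_prime_ideal RG p \<and> J \<subseteq> p}"
    show "x \<in> Gr RG J"
    proof (rule ccontr)
      assume "x \<notin> Gr RG J"
      then obtain p where "graded_prime_ideal RG p" "J \<subseteq> p" "x \<notin> p"
        using exists_graded_prime_not_mem[OF J] by blast
      then show False using x by blast
    qed
  qed
qed

lemma graded_ideal_Gr: "graded_ideal RG J \<Longrightarrow> graded_ideal RG (Gr RG J)"
  by (subst Gr_eq_Inter_graded_primes) (auto intro!: graded_ideal_Inter simp: graded_prime_ideal_def)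

lemma Gr_subset_GrI:
  assumes Y: "graded_ideal RG Y" and X: "X \<subseteq> Gr RG Y"
  shows "Gr RG X \<subseteq> Gr RG Y"
proof -
  have "Gr RG X \<subseteq> p" if p: "graded_prime_ideal RG p" "Y \<subseteq> p" for p
    using X Gr_subset_prime[OF p(1)] Gr_subset_prime[OF p] by blast
  then show ?thesis using Gr_eq_Inter_graded_primes[OF Y] by blast
qed

lemma graded_prime_ideal_Gr:
  assumes q: "graded_quasi_primary_ideal RG q"
  shows "graded_prime_ideal RG (Gr RG q)"
proof -
  have gq: "graded_ideal RG q" and qU: "q \<noteq> UNIV"
    using q unfolding graded_quasi_primary_ideal_def by auto
  have iq: "is_ideal q" using gq by (simp add: graded_ideal_def)
  have "1 \<notin> Gr RG q"
    using homogeneous_mem_Gr_iff[of 1 q] one_mem_R0 iq ideal_eq_UNIV qU by (auto simp: hom_def)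
  then have proper: "Gr RG q \<noteq> UNIV" by blast
  have "a \<in> Gr RG q \<or> b \<in> Gr RG q"
    if a: "a \<in> hom RG" and b: "b \<in> hom RG" and ab: "a * b \<in> Gr RG q" for a b
  proof -
    obtain n where "(a * b) ^ n \<in> q"
      using homogeneous_mem_Gr_iff[OF homogeneous_mult[OF a b] iq] ab by blast
    then have "a ^ n * b ^ n \<in> q" by (simp add: power_mult_distrib)
    moreover have "a ^ n \<in> hom RG" "b ^ n \<in> hom RG" using a b homogeneous_power by blast+
    ultimately have "a ^ n \<in> Gr RG q \<or> b ^ n \<in> Gr RG q"
      using q unfolding graded_quasi_primary_ideal_def by blast
    moreover have "c \<in> Gr RG q" if c: "c \<in> hom RG" "c ^ n \<in> Gr RG q" for c
    proof -
      obtain m where "(c ^ n) ^ m \<in> q"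
        using homogeneous_mem_Gr_iff[OF homogeneous_power[OF c(1)] iq] c(2) by blast
      then show ?thesis using homogeneous_mem_Gr_iff[OF c(1) iq] by (metis power_mult)
    qed
    ultimately show ?thesis using a b by blast
  qed
  then show ?thesis
    unfolding graded_prime_ideal_def using graded_ideal_Gr[OF gq] proper by blast
qed

end

section \<open>Colon ideals and the submodule IM\<close>

lemma submodule_sum_mem: "is_submodule scale N \<Longrightarrow> (\<And>i. i \<in> S \<Longrightarrow> f i \<in> N) \<Longrightarrow> sum f S \<in> N"
  by (induction S rule: infinite_finite_induct) (auto simp: is_submodule_def)

lemma colon_mono: "A \<subseteq> B \<Longrightarrow> colon scale A \<subseteq> colon scale B"
  unfolding colon_def by blast

lemma Ann_subset_colon: "is_submodule scale N \<Longrightarrow> Ann scale \<subseteq> colon scale N"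
  unfolding Ann_def colon_def is_submodule_def by auto

lemma is_submodule_GrM: "is_submodule scale (GrM RG MG scale Q)"
  unfolding GrM_def graded_prime_submodule_def graded_submodule_def is_submodule_def by blast

lemma colon_GrM_subset_colon:
  "graded_prime_submodule RG MG scale P \<Longrightarrow> Q \<subseteq> P \<Longrightarrow> colon scale (GrM RG MG scale Q) \<subseteq> colon scale P"
  by (rule colon_mono) (auto simp: GrM_def)

locale module_grading = ring_grading RG
  for RG :: "'g::group_add \<Rightarrow> 'r::comm_ring_1 set" +
  fixes MG :: "'g \<Rightarrow> 'm::ab_group_add set"
    and scale :: "'r \<Rightarrow> 'm \<Rightarrow> 'm"
  assumes graded_module: "graded_module RG MG scale"
begin

lemma M_dsum: "internal_dsum MG"
  using graded_module unfolding graded_module_def by blast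

lemma scale_mem: "a \<in> RG g \<Longrightarrow> m \<in> MG h \<Longrightarrow> scale a m \<in> MG (g + h)"
  using graded_module unfolding graded_module_def by blast

sublocale module scale
  using graded_module unfolding graded_module_def by blast

lemma comp_scale: "m \<in> MG h \<Longrightarrow> comp MG (scale r m) = (\<lambda>k. scale (comp RG r (k - h)) m)"
  by (rule comp_additive_shift[OF R_dsum M_dsum, where f = "\<lambda>x. scale x m"])
     (auto simp: scale_left_distrib scale_mem)

lemma scale_eq_sum_comp: "scale r m = (\<Sum>h\<in>supp MG m. scale r (comp MG m h))"
  using sum_comp_supp[OF M_dsum, of m] by (metis scale_sum_right)

lemma mem_colon_iff_homogeneous:
  assumes N: "is_submodule scale N"
  shows "r \<in> colon scale N \<longleftrightarrow> (\<forall>m\<in>hom MG. scale r m \<in> N)"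
proof
  assume "\<forall>m\<in>hom MG. scale r m \<in> N"
  then have "scale r (comp MG m h) \<in> N" for m h
    using comp_mem[OF M_dsum] by (auto simp: hom_def)
  then have "scale r m \<in> N" for m
    by (subst scale_eq_sum_comp) (intro submodule_sum_mem[OF N])
  then show "r \<in> colon scale N" by (simp add: colon_def)
qed (simp add: colon_def)

lemma graded_ideal_colon:
  assumes Q: "graded_submodule MG scale Q"
  shows "graded_ideal RG (colon scale Q)"
proof -
  have sQ: "is_submodule scale Q" using Q by (simp add: graded_submodule_def)
  have "is_ideal (colon scale Q)"
    using sQ unfolding is_ideal_def colon_def is_submodule_def
    by (auto simp: scale_left_distrib simp flip: scale_scale)
  moreover have "comp RG r g \<in> colon scale Q" if r: "r \<in> colon scale Q" for r g
  proof -
    have "scale (comp RG r g) m \<in> Q" if "m \<in> MG h" for m h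
    proof -
      have "scale (comp RG r g) m = comp MG (scale r m) (g + h)"
        using comp_scale[OF that] by simp
      then show ?thesis using Q r unfolding graded_submodule_def colon_def by simp
    qed
    then show ?thesis using mem_colon_iff_homogeneous[OF sQ] by (auto simp: hom_def)
  qed
  ultimately show ?thesis unfolding graded_ideal_def by blast
qed

lemma colon_proper: "Q \<noteq> UNIV \<Longrightarrow> colon scale Q \<noteq> UNIV"
proof
  assume "Q \<noteq> UNIV" "colon scale Q = UNIV"
  then have "scale 1 m \<in> Q" for m unfolding colon_def by blast
  then show False using \<open>Q \<noteq> UNIV\<close> by auto
qed

lemma graded_prime_ideal_colon:
  assumes P: "graded_prime_submodule RG MG scale P"
  shows "graded_prime_ideal RG (colon scale P)"
proof -
  have gP: "graded_submodule MG scale P" and proper: "P \<noteq> UNIV"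
    and prime: "\<And>r m. r \<in> hom RG \<Longrightarrow> m \<in> hom MG \<Longrightarrow> scale r m \<in> P \<Longrightarrow> m \<in> P \<or> r \<in> colon scale P"
    using P unfolding graded_prime_submodule_def by auto
  have sP: "is_submodule scale P" using gP by (simp add: graded_submodule_def)
  have "b \<in> colon scale P"
    if a: "a \<in> hom RG" "a \<notin> colon scale P" and b: "b \<in> hom RG" and ab: "a * b \<in> colon scale P" for a b
  proof -
    have "scale b m \<in> P" if m: "m \<in> hom MG" for m
    proof -
      have "scale b m \<in> hom MG" using b m scale_mem by (fastforce simp: hom_def)
      moreover have "scale a (scale b m) \<in> P" using ab by (simp add: colon_def)
      ultimately show ?thesis using prime a by blast
    qed
    then show ?thesis using mem_colon_iff_homogeneous[OF sP] by blast
  qed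
  then show ?thesis
    unfolding graded_prime_ideal_def using graded_ideal_colon[OF gP] colon_proper[OF proper] by blast
qed

lemma Gr_colon_subset_colon_GrM: "Gr RG (colon scale Q) \<subseteq> colon scale (GrM RG MG scale Q)"
proof
  fix r assume r: "r \<in> Gr RG (colon scale Q)"
  have "scale r m \<in> P" if P: "graded_prime_submodule RG MG scale P" "Q \<subseteq> P" for m P
  proof -
    have "r \<in> colon scale P"
      using r Gr_subset_prime[OF graded_prime_ideal_colon[OF P(1)] colon_mono[OF P(2)]] by blast
    then show ?thesis by (simp add: colon_def)
  qed
  then show "r \<in> colon scale (GrM RG MG scale Q)" by (simp add: colon_def GrM_def)
qed

lemma colon_GrM_eq_Gr_colon:
  assumes Q: "graded_submodule MG scale Q" and primeful: "graded_primeful RG MG scale Q"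
  shows "colon scale (GrM RG MG scale Q) = Gr RG (colon scale Q)"
proof
  have colon_GrM_subset: "colon scale (GrM RG MG scale Q) \<subseteq> p"
    if p: "graded_prime_ideal RG p" "colon scale Q \<subseteq> p" for p
  proof -
    obtain P where "graded_prime_submodule RG MG scale P" "Q \<subseteq> P" "colon scale P = p"
      using primeful p unfolding graded_primeful_def by blast
    then show ?thesis using colon_GrM_subset_colon by blast
  qed
  show "colon scale (GrM RG MG scale Q) \<subseteq> Gr RG (colon scale Q)"
    unfolding Gr_eq_Inter_graded_primes[OF graded_ideal_colon[OF Q]]
    by (intro Inter_greatest) (simp add: colon_GrM_subset)
qed (rule Gr_colon_subset_colon_GrM)

abbreviation IM :: "'r set \<Rightarrow> 'm set" where
  "IM I \<equiv> ideal_times_module scale I"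

lemma IM_induct[consumes 1, case_names zero step]:
  assumes "x \<in> IM I" "P 0" "\<And>r m y. r \<in> I \<Longrightarrow> P y \<Longrightarrow> P (scale r m + y)"
  shows "P x"
proof -
  obtain xs where xs: "set (map fst xs) \<subseteq> I" "x = (\<Sum>(r, m)\<leftarrow>xs. scale r m)"
    using assms(1) unfolding ideal_times_module_def by blast
  have "P (\<Sum>(r, m)\<leftarrow>xs. scale r m)" using xs(1)
    by (induction xs) (auto intro: assms(2,3))
  then show ?thesis using xs(2) by simp
qed

lemma zero_mem_IM: "0 \<in> IM I"
  unfolding ideal_times_module_def by (auto intro!: exI[of _ "[]"])

lemma scale_add_mem_IM: "r \<in> I \<Longrightarrow> y \<in> IM I \<Longrightarrow> scale r m + y \<in> IM I"
proof -
  assume r: "r \<in> I" and "y \<in> IM I"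
  then obtain xs where "set (map fst xs) \<subseteq> I" "y = (\<Sum>(r, m)\<leftarrow>xs. scale r m)"
    unfolding ideal_times_module_def by blast
  then have "set (map fst ((r, m) # xs)) \<subseteq> I" "scale r m + y = (\<Sum>(r, m)\<leftarrow>(r, m) # xs. scale r m)"
    using r by auto
  then show ?thesis unfolding ideal_times_module_def by blast
qed

lemma scale_mem_IM: "r \<in> I \<Longrightarrow> scale r m \<in> IM I"
  using scale_add_mem_IM[OF _ zero_mem_IM, of r I m] by simp

lemma add_mem_IM: "x \<in> IM I \<Longrightarrow> y \<in> IM I \<Longrightarrow> x + y \<in> IM I"
  by (induction x rule: IM_induct) (auto simp: add.assoc scale_add_mem_IM)

lemma is_submodule_IM:
  assumes I: "is_ideal I"
  shows "is_submodule scale (IM I)"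
proof -
  have "scale s x \<in> IM I" if "x \<in> IM I" for s x
    using that
  proof (induction x rule: IM_induct)
    case zero then show ?case by (simp add: zero_mem_IM)
  next
    case (step r m y)
    then show ?case
      using ideal_mult_mem[OF I step(1), of s] scale_add_mem_IM
      by (simp add: scale_right_distrib)
  qed
  then show ?thesis unfolding is_submodule_def using zero_mem_IM add_mem_IM by blast
qed

lemma IM_subset_iff: "is_submodule scale N \<Longrightarrow> IM I \<subseteq> N \<longleftrightarrow> I \<subseteq> colon scale N"
proof
  assume N: "is_submodule scale N" and "I \<subseteq> colon scale N"
  then show "IM I \<subseteq> N"
  proof (intro subsetI)
    fix x assume "x \<in> IM I"
    then show "x \<in> N"
      by (induction x rule: IM_induct)
         (use N \<open>I \<subseteq> colon scale N\<close> in \<open>auto simp: is_submodule_def colon_def\<close>)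
  qed
qed (auto simp: colon_def intro: scale_mem_IM)

lemma graded_submodule_IM:
  assumes I: "graded_ideal RG I"
  shows "graded_submodule MG scale (IM I)"
proof -
  have sub: "is_submodule scale (IM I)"
    using I by (intro is_submodule_IM) (simp add: graded_ideal_def)
  have "comp MG x g \<in> IM I" if "x \<in> IM I" for x g
    using that
  proof (induction x rule: IM_induct)
    case zero then show ?case by (simp add: comp_zero[OF M_dsum] zero_mem_IM)
  next
    case (step r m y)
    have "comp MG (scale r m) g = (\<Sum>h\<in>supp MG m. scale (comp RG r (g - h)) (comp MG m h))"
      by (subst scale_eq_sum_comp) (simp add: comp_sum[OF M_dsum] comp_scale[OF comp_mem[OF M_dsum]])
    also have "\<dots> \<in> IM I"
      using I step(1) by (intro submodule_sum_mem[OF sub] scale_mem_IM) (simp add: graded_ideal_def)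
    finally show ?case using step by (simp add: comp_add[OF M_dsum] add_mem_IM)
  qed
  then show ?thesis using sub unfolding graded_submodule_def by blast
qed

section \<open>Quasi-primary submodules\<close>

lemma graded_quasi_primary_ideal_colon:
  assumes Q: "graded_quasi_primary_submodule RG MG scale Q"
    and primeful: "graded_primeful RG MG scale Q"
  shows "graded_quasi_primary_ideal RG (colon scale Q)"
proof -
  have gQ: "graded_submodule MG scale Q" and proper: "Q \<noteq> UNIV"
    and qp: "\<And>r m. r \<in> hom RG \<Longrightarrow> m \<in> hom MG \<Longrightarrow> scale r m \<in> Q \<Longrightarrow>
               r \<in> Gr RG (colon scale Q) \<or> m \<in> GrM RG MG scale Q"
    using Q unfolding graded_quasi_primary_submodule_def by auto
  have "b \<in> Gr RG (colon scale Q)"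
    if a: "a \<in> hom RG" "a \<notin> Gr RG (colon scale Q)" and b: "b \<in> hom RG"
      and ab: "a * b \<in> colon scale Q" for a b
  proof -
    have "scale b m \<in> GrM RG MG scale Q" if m: "m \<in> hom MG" for m
    proof -
      have "scale b m \<in> hom MG" using b m scale_mem by (fastforce simp: hom_def)
      moreover have "scale a (scale b m) \<in> Q" using ab by (simp add: colon_def)
      ultimately show ?thesis using qp a by blast
    qed
    then have "b \<in> colon scale (GrM RG MG scale Q)"
      by (simp add: mem_colon_iff_homogeneous[OF is_submodule_GrM])
    then show ?thesis using colon_GrM_eq_Gr_colon[OF gQ primeful] by blast
  qed
  then show ?thesis
    unfolding graded_quasi_primary_ideal_def
    using graded_ideal_colon[OF gQ] colon_proper[OF proper] by blast
qed

lemma subset_Gr_colon_iff: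
  assumes Q: "graded_submodule MG scale Q" and primeful: "graded_primeful RG MG scale Q"
    and I: "graded_ideal RG I"
  shows "I \<subseteq> Gr RG (colon scale Q) \<longleftrightarrow> Gr RG (colon scale (IM I)) \<subseteq> Gr RG (colon scale Q)"
proof
  note GrM_eq = colon_GrM_eq_Gr_colon[OF Q primeful]
  assume "I \<subseteq> Gr RG (colon scale Q)"
  then have "IM I \<subseteq> GrM RG MG scale Q"
    by (simp add: IM_subset_iff[OF is_submodule_GrM] GrM_eq)
  then have "colon scale (IM I) \<subseteq> Gr RG (colon scale Q)"
    using colon_mono GrM_eq by metis
  then show "Gr RG (colon scale (IM I)) \<subseteq> Gr RG (colon scale Q)"
    by (rule Gr_subset_GrI[OF graded_ideal_colon[OF Q]])
next
  assume IM_Q: "Gr RG (colon scale (IM I)) \<subseteq> Gr RG (colon scale Q)"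
  have "I \<subseteq> colon scale (IM I)" by (auto simp: colon_def scale_mem_IM)
  then have "Gr RG I \<subseteq> Gr RG (colon scale (IM I))" by (rule Gr_mono)
  then show "I \<subseteq> Gr RG (colon scale Q)" using subset_Gr[OF I] IM_Q by blast
qed

lemma colon_mem_qpSpec_Rbar:
  assumes "Q \<in> qpSpec RG MG scale"
  shows "colon scale Q \<in> qpSpec_Rbar RG scale"
proof -
  have Q: "graded_quasi_primary_submodule RG MG scale Q" and "graded_primeful RG MG scale Q"
    using assms by (simp_all add: qpSpec_def)
  then have "graded_quasi_primary_ideal RG (colon scale Q)"
    by (rule graded_quasi_primary_ideal_colon)
  moreover have "Ann scale \<subseteq> colon scale Q"
    using Q by (intro Ann_subset_colon) (simp add: graded_quasi_primary_submodule_def graded_submodule_def)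
  ultimately show ?thesis by (simp add: qpSpec_Rbar_def)
qed

lemma Gr_mem_Spec_Rbar:
  assumes "q \<in> qpSpec_Rbar RG scale"
  shows "Gr RG q \<in> Spec_Rbar RG scale"
proof -
  have q: "graded_quasi_primary_ideal RG q" and "Ann scale \<subseteq> q"
    using assms by (simp_all add: qpSpec_Rbar_def)
  moreover have "q \<subseteq> Gr RG q"
    using q by (intro subset_Gr) (simp add: graded_quasi_primary_ideal_def)
  ultimately show ?thesis using graded_prime_ideal_Gr[OF q] by (auto simp: Spec_Rbar_def)
qed

lemma qpSpec_Int_vimage_qpV_Rbar:
  assumes I: "graded_ideal RG I"
  shows "qpSpec RG MG scale \<inter> psi_q scale -` qpV_Rbar RG scale I = qpV_M RG MG scale (IM I)"
proof (rule set_eqI)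
  fix Q
  show "Q \<in> qpSpec RG MG scale \<inter> psi_q scale -` qpV_Rbar RG scale I \<longleftrightarrow> Q \<in> qpV_M RG MG scale (IM I)"
  proof (cases "Q \<in> qpSpec RG MG scale")
    case True
    then have "graded_submodule MG scale Q" "graded_primeful RG MG scale Q"
      by (simp_all add: qpSpec_def graded_quasi_primary_submodule_def)
    then show ?thesis
      using True colon_mem_qpSpec_Rbar[OF True] Gr_mem_Spec_Rbar[OF colon_mem_qpSpec_Rbar[OF True]]
        subset_Gr_colon_iff[OF _ _ I]
      by (simp add: qpV_M_def qpV_Rbar_def V_Rbar_def phi_R_def psi_q_def)
  qed (simp add: qpV_M_def)
qed

end

theorem theorem3p11:
  fixes RG :: "'g::group_add \<Rightarrow> 'r::comm_ring_1 set"
    and MG :: "'g \<Rightarrow> 'm::ab_group_add set"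
    and scale :: "'r \<Rightarrow> 'm \<Rightarrow> 'm"
    and I :: "'r set"
  assumes "graded_module RG MG scale"
    and "graded_ideal RG I"
    and "Ann scale \<subseteq> I"
  shows "psi_q scale ` qpSpec RG MG scale \<subseteq> qpSpec_Rbar RG scale
    \<and> phi_R RG ` qpSpec_Rbar RG scale \<subseteq> Spec_Rbar RG scale
    \<and> varphi RG scale ` qpSpec RG MG scale \<subseteq> Spec_Rbar RG scale
    \<and> qpSpec RG MG scale \<inter> varphi RG scale -` V_Rbar RG scale I
        = qpSpec RG MG scale \<inter> (phi_R RG \<circ> psi_q scale) -` V_Rbar RG scale I
    \<and> qpSpec RG MG scale \<inter> (phi_R RG \<circ> psi_q scale) -` V_Rbar RG scale I
        = qpSpec RG MG scale \<inter> psi_q scale -` qpV_Rbar RG scale I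
    \<and> qpSpec RG MG scale \<inter> psi_q scale -` qpV_Rbar RG scale I
        = qpV_M RG MG scale (ideal_times_module scale I)
    \<and> graded_submodule MG scale (ideal_times_module scale I)"
proof -
  \<comment> \<open>Ann(M) \<subseteq> I is needed only to form the bar of I; here ideals of Rbar are
    represented by their preimages in R.\<close>
  interpret module_grading RG MG scale
    by unfold_locales (use assms(1) in \<open>simp_all add: graded_module_def\<close>)
  have psi_phi: "qpSpec RG MG scale \<inter> (phi_R RG \<circ> psi_q scale) -` V_Rbar RG scale I
      = qpSpec RG MG scale \<inter> psi_q scale -` qpV_Rbar RG scale I"
    using colon_mem_qpSpec_Rbar by (auto simp: qpV_Rbar_def psi_q_def)
  show ?thesis
    using psi_phi qpSpec_Int_vimage_qpV_Rbar[OF assms(2)] graded_submodule_IM[OF assms(2)]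
      colon_mem_qpSpec_Rbar Gr_mem_Spec_Rbar
    by (simp add: image_subset_iff varphi_def psi_q_def phi_R_def)
qed

end
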